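(* For every positive integer $m$, $d(m)=|N/P_{J(m)}|$, where $N$ is the multiplicative semigroup of all positive integers, $J(m)=mN$ is the ideal of $N$ generated by $m$, and $P_{J(m)}$ is the principal congruence on $N$ defined by $J(m)$.
   Context: $d(m)$ is the number of positive divisors of $m$. For a semigroup $S$, $H\subseteq S$, $a\in S$: $H\dots a=\{(x,y)\in S\times S: xay\in H\}$ and $P_H=\{(a,b)\in S\times S: H\dots a=H\dots b\}$. *)

theory Defs
  imports Main
begin

definition num_divisors :: "nat \<Rightarrow> nat" where
  "num_divisors m = card {k. k dvd m}"

definition sg_res :: "'a set \<Rightarrow> ('a \<Rightarrow> 'a \<Rightarrow> 'a) \<Rightarrow> 'a set \<Rightarrow> 'a \<Rightarrow> ('a \<times> 'a) set" where
  "sg_res S mult H a = {(x, y). x \<in> S \<and> y \<in> S \<and> mult (mult x a) y \<in> H}"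

definition princ_cong :: "'a set \<Rightarrow> ('a \<Rightarrow> 'a \<Rightarrow> 'a) \<Rightarrow> 'a set \<Rightarrow> 'a rel" where
  "princ_cong S mult H = {(a, b). a \<in> S \<and> b \<in> S \<and> sg_res S mult H a = sg_res S mult H b}"

definition posN :: "nat set" where
  "posN = {n. 0 < n}"

definition J_ideal :: "nat \<Rightarrow> nat set" where
  "J_ideal m = {m * n | n. n \<in> posN}"

end

theory Submission
  imports Defs
begin

text \<open>Since \<open>H = J(m) = mN\<close>, a pair \<open>(x, y)\<close> lies in \<open>H..a\<close> iff \<open>m div gcd a m\<close> divides \<open>x y\<close>.
  Hence \<open>a\<close> and \<open>b\<close> are \<open>P_H\<close>-related iff \<open>gcd a m = gcd b m\<close>, so the classes of \<open>P_H\<close>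
  correspond to the values of \<open>gcd _ m\<close> on \<open>N\<close>, which are exactly the divisors of \<open>m\<close>.\<close>

lemma card_quotient_kernel_on:
  "card (A // {(a, b). a \<in> A \<and> b \<in> A \<and> f a = f b}) = card (f ` A)"
proof -
  let ?fibre = "\<lambda>y. {x \<in> A. y = f x}"
  have "A // {(a, b). a \<in> A \<and> b \<in> A \<and> f a = f b} = ?fibre ` f ` A"
    unfolding quotient_def by auto
  moreover have "inj_on ?fibre (f ` A)"
    by (auto simp: inj_on_def)
  ultimately show ?thesis
    by (simp add: card_image)
qed

lemma dvd_mult_iff_div_gcd_dvd:
  fixes m a k :: nat
  assumes "gcd a m \<noteq> 0"
  shows "m dvd a * k \<longleftrightarrow> m div gcd a m dvd k"
proof -
  obtain a' m' where a': "a = gcd a m * a'" and m': "m = gcd a m * m'"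
    by (metis gcd_dvd1 gcd_dvd2 dvdE)
  have "coprime a' m'"
    using a' m' assms by (metis div_gcd_coprime gcd_eq_0_iff nonzero_mult_div_cancel_left)
  have "m dvd a * k \<longleftrightarrow> gcd a m * m' dvd gcd a m * (a' * k)"
    using a' m' by (metis mult.assoc)
  also have "\<dots> \<longleftrightarrow> m' dvd a' * k"
    using assms by (rule dvd_times_left_cancel_iff)
  also have "\<dots> \<longleftrightarrow> m' dvd k"
    using \<open>coprime a' m'\<close> by (simp add: coprime_commute coprime_dvd_mult_right_iff)
  finally have "m dvd a * k \<longleftrightarrow> m' dvd k" .
  moreover have "m div gcd a m = m'"
    using assms m' by (metis nonzero_mult_div_cancel_left)
  ultimately show ?thesis
    by simp
qed

lemma J_ideal_eq: "0 < m \<Longrightarrow> J_ideal m = {k. 0 < k \<and> m dvd k}"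
  unfolding J_ideal_def posN_def by (auto elim!: dvdE)

lemma sg_res_J_ideal:
  assumes "0 < m" "0 < a"
  shows "sg_res posN (*) (J_ideal m) a = {(x, y). 0 < x \<and> 0 < y \<and> m div gcd a m dvd x * y}"
proof -
  have "m dvd x * a * y \<longleftrightarrow> m div gcd a m dvd x * y" for x y
    using dvd_mult_iff_div_gcd_dvd[of a m "x * y"] assms by (simp add: ac_simps)
  then show ?thesis
    using assms unfolding sg_res_def J_ideal_eq[OF assms(1)] posN_def by auto
qed

lemma sg_res_J_ideal_eq_iff:
  assumes "0 < m" "0 < a" "0 < b"
  shows "sg_res posN (*) (J_ideal m) a = sg_res posN (*) (J_ideal m) b \<longleftrightarrow> gcd a m = gcd b m"
proof
  assume "sg_res posN (*) (J_ideal m) a = sg_res posN (*) (J_ideal m) b"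
  then have "(1, k) \<in> sg_res posN (*) (J_ideal m) a \<longleftrightarrow> (1, k) \<in> sg_res posN (*) (J_ideal m) b"
    for k by simp
  then have same_dvd: "m div gcd a m dvd k \<longleftrightarrow> m div gcd b m dvd k" if "0 < k" for k
    using that assms by (auto simp: sg_res_J_ideal)
  have "0 < m div gcd a m" "0 < m div gcd b m"
    using assms by (auto simp: div_greater_zero_iff gcd_le2_nat)
  then have "m div gcd a m = m div gcd b m"
    using same_dvd by (meson dvd_antisym dvd_refl)
  then have "m div (m div gcd a m) = m div (m div gcd b m)"
    by simp
  then show "gcd a m = gcd b m"
    using assms by (simp add: div_div_eq_right)
qed (use assms sg_res_J_ideal in simp)

lemma princ_cong_J_ideal:
  assumes "0 < m"
  shows "princ_cong posN (*) (J_ideal m) =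
    {(a, b). a \<in> posN \<and> b \<in> posN \<and> gcd a m = gcd b m}"
  using sg_res_J_ideal_eq_iff[OF assms] unfolding princ_cong_def posN_def by auto

lemma gcd_image_posN:
  fixes m :: nat
  assumes "0 < m"
  shows "(\<lambda>a. gcd a m) ` posN = {d. d dvd m}"
proof
  show "{d. d dvd m} \<subseteq> (\<lambda>a. gcd a m) ` posN"
  proof
    fix d assume "d \<in> {d. d dvd m}"
    then have "gcd d m = d" "0 < d"
      using assms by (auto simp: gcd_nat.absorb1 intro!: Nat.gr0I)
    then show "d \<in> (\<lambda>a. gcd a m) ` posN"
      unfolding posN_def by (metis image_eqI mem_Collect_eq)
  qed
qed auto

theorem theorem6:
  fixes m :: nat
  assumes "0 < m"
  shows "num_divisors m = card (posN // princ_cong posN (*) (J_ideal m))"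
  unfolding princ_cong_J_ideal[OF assms] card_quotient_kernel_on gcd_image_posN[OF assms]
    num_divisors_def ..

end
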